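(* Let $\mathcal{O}=(S,S_+,R,E,f,N)$ be an observation table, and let $(\overline{b_\omega})_{\omega\in S\cup S_+\cup R}$ and $(\overline{q_\omega})_{\omega\in S\cup S_+\cup R}$ be an assignment of the ending reset variables and location variables satisfying $C_1\wedge C_2\wedge C_3\wedge C_4$. Let $\mathcal{H}$ be the hypothesis automaton constructed from $\mathcal{O}$ and this assignment. Then: (i) $\mathcal{H}$ is a deterministic one-clock timed automaton; (ii) for every $\omega\in S\cup S_+\cup R$, $\mathcal{H}$ accepts $\omega$ if and only if $\textsf{MQ}(\omega)=+$; (iii) for any $\omega_1,\omega_2\in S\cup S_+\cup R$, if $f(\omega_1,\omega_2,i_1,i_2)=\bot$ where $i_1,i_2$ are the last resets of $\omega_1,\omega_2$ determined by the assignment $\overline{b}$ (i.e. $lr(\omega_1,i_1)$ and $lr(\omega_2,i_2)$ hold), then $\overline{q_{\omega_1}}\neq\overline{q_{\omega_2}}$ and $\omega_1,\omega_2$ reach distinct locations in $\mathcal{H}$.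
   Context: Setting: a finite alphabet $\Sigma$, a single clock, and a target timed language $L$ with membership function $\textsf{MQ}(\omega)=+$ if $\omega\in L$, $-$ otherwise. A one-clock timed automaton (OTA) is $(\Sigma,Q,q_0,F,c,\Delta)$ with transitions $(q,\sigma,\phi,b,q')\in Q\times\Sigma\times\Phi_c\times\{\top,\bot\}\times Q$, guards $\phi$ being intervals with endpoints in $\mathbb{N}\cup\{\infty\}$; a timed word $(\sigma_1,t_1)\cdots(\sigma_n,t_n)$ ($t_i\ge0$ delays) runs from clock value $0$ at $q_0$, taking at step $i$ a transition from the current location with action $\sigma_i$ whose guard contains (current clock value $+t_i$), after which the clock becomes $0$ if the transition's reset flag $b=\top$ and (current clock $+t_i$) otherwise; it is accepted if the run ends in $F$. Deterministic means guards of transitions with the same source and action are disjoint. Regions relative to a fixed $\kappa\in\mathbb{N}$: $[n,n]$ for $n\le\kappa$, $(n,n+1)$ for $n<\kappa$, $(\kappa,\infty)$; $\llbracket v\rrbracket$ is the region containing $v$. For a timed word $\omega$ of length $n$ and $0\le i\le n$, $\nu_c(\omega,i)=\sum_{j=i+1}^n t_j$. Test $T(\omega_1,\omega_2,i_1,i_2,e)$: if $e$ empty, $T=\top$ iff $\textsf{MQ}(\omega_1)=\textsf{MQ}(\omega_2)$; otherwise, with $e=(\sigma_1,t_1)\cdots(\sigma_m,t_m)$, $\nu_1=\nu_c(\omega_1,i_1)$, $\nu_2=\nu_c(\omega_2,i_2)$, form $e_1,e_2$ by adding $|\nu_1-\nu_2|$ to the first delay of $e$ for the word with the smaller $\nu$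 (and $e_1=e_2=e$ if equal), and $T=\top$ iff $\textsf{MQ}(\omega_1e_1)=\textsf{MQ}(\omega_2e_2)$. If $m$ is the length of the longest common prefix of $\omega_1,\omega_2$, the valid last-reset combinations are $\mathcal{C}(\omega_1,\omega_2)=\{(i_1,i_2):0\le i_1\le|\omega_1|,0\le i_2\le|\omega_2|,(i_1\le m\wedge i_2\le m)\Rightarrow i_1=i_2\}$. An observation table $\mathcal{O}=(S,S_+,R,E,f,N)$: $S,S_+,R$ disjoint finite sets of timed words with $S\cup S_+\cup R$ prefix-closed, $\epsilon\in S$, and $\omega\cdot(\sigma,0)\in S\cup S_+\cup R$ for all $\omega\in S\cup S_+$, $\sigma\in\Sigma$; $E$ a finite set of timed words with $\epsilon\in E$; $N\in\mathbb{N}$; and $f(\omega_1,\omega_2,i_1,i_2)=\top$ iff $T(\omega_1,\omega_2,i_1,i_2,e)=\top$ for all $e\in E$ (for $\omega_1,\omega_2\in S\cup S_+\cup R$, $(i_1,i_2)\in\mathcal{C}(\omega_1,\omega_2)$), else $\bot$. Variables: for each $\omega\in S\cup S_+\cup R$ a Boolean ending reset variable $b_\omega$ (whether the clock resets after the last action of $\omega$; $b_\epsilon=\top$) and an integer location variable $q_\omega$. With $\omega|_i$ the length-$i$ prefix, $lr(\omega,i)=b_{\omega|_i}\wedge\bigwedge_{i<j\le|\omega|}\neg b_{\omega|_j}$ and $LR(\omega_1,\omega_2,i,j)=lr(\omega_1,i)\wedge lr(\omega_2,j)$. Constraints: $C_1$ is the conjunction over all $\omega_1,\omega_2$, $(i,j)\in\mathcal{C}(\omega_1,\omega_2)$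 with $f(\omega_1,\omega_2,i,j)=\bot$ of $LR(\omega_1,\omega_2,i,j)\Rightarrow q_{\omega_1}\neq q_{\omega_2}$. $C_2$ is the conjunction, over all $\omega_1,\omega_2$ with $\omega_1'=\omega_1(\sigma,t_1)$, $\omega_2'=\omega_2(\sigma,t_2)$ in $S\cup S_+\cup R$ and $(i,j)\in\mathcal{C}(\omega_1,\omega_2)$ with $f(\omega_1,\omega_2,i,j)=\top$ and $\llbracket\nu_c(\omega_1,i)+t_1\rrbracket=\llbracket\nu_c(\omega_2,j)+t_2\rrbracket$, of $(q_{\omega_1}=q_{\omega_2}\wedge LR(\omega_1,\omega_2,i,j))\Rightarrow(b_{\omega_1'}=b_{\omega_2'}\wedge q_{\omega_1'}=q_{\omega_2'})$. $C_3=\bigwedge_{1\le k\le N}\bigvee_{\omega\in S\cup S_+}q_\omega=k\ \wedge\ \bigwedge_{\omega\in S\cup S_+\cup R}1\le q_\omega\le N$. $C_4=\bigwedge_{1\le k\le|S|}q_{\omega_k}=k$ for a fixed enumeration $\omega_1,\dots,\omega_{|S|}$ of $S$. Hypothesis construction from an assignment $\overline{b},\overline{q}$: $Q_{\mathcal{H}}=\{\overline{q_\omega}:\omega\in S\cup S_+\}$, initial location $\overline{q_\epsilon}$, accepting $F_{\mathcal{H}}=\{\overline{q_\omega}:\omega\in S\cup S_+,\textsf{MQ}(\omega)=+\}$. For each pair $\omega_1,\omega_2=\omega_1(\sigma,t)$ in $S\cup S_+\cup R$ form the auxiliary transition $(\overline{q_{\omega_1}},\sigma,\psi,\overline{b_{\omega_2}},\overline{q_{\omega_2}})$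 where $\psi=\nu(\omega_1)+t$ and $\nu(\omega_1)$ is the clock value after $\omega_1$ computed using the resets $\overline{b}$ of its prefixes. For each $q,\sigma$, sort the list of values $\psi$ of auxiliary transitions from $q$ with action $\sigma$ as $\mu_0<\dots<\mu_n$ and apply the partition function $P$; for each auxiliary transition with value $\mu_i$ add $(q,\sigma,g_i,b,q')$ to $\Delta_{\mathcal{H}}$. The partition function: with $\mu_0=0$ and $\mu_{n+1}=\infty$, $g_i=[\mu_i,\mu_{i+1})$ if $\mu_i,\mu_{i+1}\in\mathbb{N}$; $(\lfloor\mu_i\rfloor,\mu_{i+1})$ if $\mu_i\notin\mathbb{N},\mu_{i+1}\in\mathbb{N}$; $[\mu_i,\lfloor\mu_{i+1}\rfloor]$ if $\mu_i\in\mathbb{N},\mu_{i+1}\notin\mathbb{N}$; $(\lfloor\mu_i\rfloor,\lfloor\mu_{i+1}\rfloor]$ if both $\notin\mathbb{N}$ (with $\infty$ treated as an integer). *)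

theory Defs
  imports Complex_Main
begin

type_synonym 'a tword = "('a \<times> real) list"

definition tword_over :: "'a set \<Rightarrow> 'a tword \<Rightarrow> bool" where
  "tword_over Alph w \<longleftrightarrow> (\<forall>(\<sigma>, t) \<in> set w. \<sigma> \<in> Alph \<and> t \<ge> 0)"

definition nu_c :: "'a tword \<Rightarrow> nat \<Rightarrow> real" where
  "nu_c w i = sum_list (map snd (drop i w))"

definition region :: "nat \<Rightarrow> real \<Rightarrow> real set" where
  "region \<kappa> v =
     (if v > real \<kappa> then {x. x > real \<kappa>}
      else if v \<in> \<nat> then {v}
      else {x. real_of_int \<lfloor>v\<rfloor> < x \<and> x < real_of_int \<lfloor>v\<rfloor> + 1})"

fun add_first :: "real \<Rightarrow> 'a tword \<Rightarrow> 'a tword" where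
  "add_first d [] = []"
| "add_first d ((\<sigma>, t) # e) = (\<sigma>, t + d) # e"

definition test :: "('a tword \<Rightarrow> bool) \<Rightarrow> 'a tword \<Rightarrow> 'a tword \<Rightarrow> nat \<Rightarrow> nat \<Rightarrow> 'a tword \<Rightarrow> bool" where
  "test MQ w1 w2 i1 i2 e =
     (if e = [] then MQ w1 = MQ w2
      else (let v1 = nu_c w1 i1; v2 = nu_c w2 i2; d = \<bar>v1 - v2\<bar>;
                e1 = (if v1 < v2 then add_first d e else e);
                e2 = (if v2 < v1 then add_first d e else e)
            in MQ (w1 @ e1) = MQ (w2 @ e2)))"

fun lcp_len :: "'a list \<Rightarrow> 'a list \<Rightarrow> nat" where
  "lcp_len (x # xs) (y # ys) = (if x = y then Suc (lcp_len xs ys) else 0)"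
| "lcp_len _ _ = 0"

definition valid_combs :: "'a tword \<Rightarrow> 'a tword \<Rightarrow> (nat \<times> nat) set" where
  "valid_combs w1 w2 = {(i1, i2). i1 \<le> length w1 \<and> i2 \<le> length w2 \<and>
      ((i1 \<le> lcp_len w1 w2 \<and> i2 \<le> lcp_len w1 w2) \<longrightarrow> i1 = i2)}"

definition ftab :: "('a tword \<Rightarrow> bool) \<Rightarrow> 'a tword set \<Rightarrow> 'a tword \<Rightarrow> 'a tword \<Rightarrow> nat \<Rightarrow> nat \<Rightarrow> bool" where
  "ftab MQ E w1 w2 i1 i2 \<longleftrightarrow> (\<forall>e \<in> E. test MQ w1 w2 i1 i2 e)"

definition obs_table :: "'a set \<Rightarrow> 'a tword set \<Rightarrow> 'a tword set \<Rightarrow> 'a tword set \<Rightarrow> 'a tword set \<Rightarrow> bool" where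
  "obs_table Alph S Sp R E \<longleftrightarrow>
     finite S \<and> finite Sp \<and> finite R \<and> finite E \<and>
     S \<inter> Sp = {} \<and> S \<inter> R = {} \<and> Sp \<inter> R = {} \<and>
     (\<forall>w \<in> S \<union> Sp \<union> R \<union> E. tword_over Alph w) \<and>
     (\<forall>w \<in> S \<union> Sp \<union> R. \<forall>i \<le> length w. take i w \<in> S \<union> Sp \<union> R) \<and>
     [] \<in> S \<and>
     (\<forall>w \<in> S \<union> Sp. \<forall>\<sigma> \<in> Alph. w @ [(\<sigma>, 0)] \<in> S \<union> Sp \<union> R) \<and>
     [] \<in> E"

definition lr :: "('a tword \<Rightarrow> bool) \<Rightarrow> 'a tword \<Rightarrow> nat \<Rightarrow> bool" where
  "lr b w i \<longleftrightarrow> b (take i w) \<and> (\<forall>j. i < j \<and> j \<le> length w \<longrightarrow> \<not> b (take j w))"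

definition LR :: "('a tword \<Rightarrow> bool) \<Rightarrow> 'a tword \<Rightarrow> 'a tword \<Rightarrow> nat \<Rightarrow> nat \<Rightarrow> bool" where
  "LR b w1 w2 i j \<longleftrightarrow> lr b w1 i \<and> lr b w2 j"

definition C1 :: "('a tword \<Rightarrow> bool) \<Rightarrow> 'a tword set \<Rightarrow> 'a tword set \<Rightarrow> 'a tword set \<Rightarrow> 'a tword set
                  \<Rightarrow> ('a tword \<Rightarrow> bool) \<Rightarrow> ('a tword \<Rightarrow> int) \<Rightarrow> bool" where
  "C1 MQ S Sp R E b q \<longleftrightarrow>
     (\<forall>w1 \<in> S \<union> Sp \<union> R. \<forall>w2 \<in> S \<union> Sp \<union> R. \<forall>(i, j) \<in> valid_combs w1 w2.
        \<not> ftab MQ E w1 w2 i j \<longrightarrow> (LR b w1 w2 i j \<longrightarrow> q w1 \<noteq> q w2))"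

definition C2 :: "nat \<Rightarrow> ('a tword \<Rightarrow> bool) \<Rightarrow> 'a tword set \<Rightarrow> 'a tword set \<Rightarrow> 'a tword set \<Rightarrow> 'a tword set
                  \<Rightarrow> ('a tword \<Rightarrow> bool) \<Rightarrow> ('a tword \<Rightarrow> int) \<Rightarrow> bool" where
  "C2 \<kappa> MQ S Sp R E b q \<longleftrightarrow>
     (\<forall>w1 w2 \<sigma> t1 t2 i j.
        w1 \<in> S \<union> Sp \<union> R \<and> w2 \<in> S \<union> Sp \<union> R \<and>
        w1 @ [(\<sigma>, t1)] \<in> S \<union> Sp \<union> R \<and> w2 @ [(\<sigma>, t2)] \<in> S \<union> Sp \<union> R \<and>
        (i, j) \<in> valid_combs w1 w2 \<and> ftab MQ E w1 w2 i j \<and>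
        region \<kappa> (nu_c w1 i + t1) = region \<kappa> (nu_c w2 j + t2) \<longrightarrow>
        ((q w1 = q w2 \<and> LR b w1 w2 i j) \<longrightarrow>
           (b (w1 @ [(\<sigma>, t1)]) = b (w2 @ [(\<sigma>, t2)]) \<and> q (w1 @ [(\<sigma>, t1)]) = q (w2 @ [(\<sigma>, t2)]))))"

definition C3 :: "nat \<Rightarrow> 'a tword set \<Rightarrow> 'a tword set \<Rightarrow> 'a tword set \<Rightarrow> ('a tword \<Rightarrow> int) \<Rightarrow> bool" where
  "C3 N S Sp R q \<longleftrightarrow>
     (\<forall>k::int. 1 \<le> k \<and> k \<le> int N \<longrightarrow> (\<exists>w \<in> S \<union> Sp. q w = k)) \<and>
     (\<forall>w \<in> S \<union> Sp \<union> R. 1 \<le> q w \<and> q w \<le> int N)"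

text \<open>\<open>enum\<close> is the fixed enumeration w_1, ..., w_|S| of S.\<close>
definition C4 :: "'a tword set \<Rightarrow> (nat \<Rightarrow> 'a tword) \<Rightarrow> ('a tword \<Rightarrow> int) \<Rightarrow> bool" where
  "C4 S enum q \<longleftrightarrow> (\<forall>k. 1 \<le> k \<and> k \<le> card S \<longrightarrow> q (enum k) = int k)"

text \<open>Guards: intervals with endpoints in N \<union> {\<infinity>}.  \<open>Guard lo lc hi hc\<close> is the interval with
  lower endpoint lo (closed iff lc) and upper endpoint hi (None = \<infinity>, always open; closed iff hc).\<close>
datatype guard = Guard nat bool "nat option" bool

fun guard_sat :: "guard \<Rightarrow> real \<Rightarrow> bool" where
  "guard_sat (Guard lo lc hi hc) v \<longleftrightarrow>
     (if lc then real lo \<le> v else real lo < v) \<and>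
     (case hi of None \<Rightarrow> True | Some h \<Rightarrow> (if hc then v \<le> real h else v < real h))"

type_synonym 'a trans = "int \<times> 'a \<times> guard \<times> bool \<times> int"

record 'a ota =
  locs :: "int set"
  init :: int
  accs :: "int set"
  trans :: "'a trans set"

definition is_OTA :: "'a set \<Rightarrow> 'a ota \<Rightarrow> bool" where
  "is_OTA Alph A \<longleftrightarrow> finite (locs A) \<and> init A \<in> locs A \<and> accs A \<subseteq> locs A \<and>
     finite (trans A) \<and>
     (\<forall>(p, \<sigma>, g, r, p') \<in> trans A. p \<in> locs A \<and> \<sigma> \<in> Alph \<and> p' \<in> locs A)"

definition deterministic :: "'a ota \<Rightarrow> bool" where
  "deterministic A \<longleftrightarrow>
     (\<forall>tr1 \<in> trans A. \<forall>tr2 \<in> trans A. case (tr1, tr2) of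
        ((p1, \<sigma>1, g1, r1, p1'), (p2, \<sigma>2, g2, r2, p2')) \<Rightarrow>
          tr1 \<noteq> tr2 \<and> p1 = p2 \<and> \<sigma>1 = \<sigma>2 \<longrightarrow> (\<forall>v. \<not> (guard_sat g1 v \<and> guard_sat g2 v)))"

inductive run :: "'a trans set \<Rightarrow> int \<Rightarrow> real \<Rightarrow> 'a tword \<Rightarrow> int \<Rightarrow> bool" for T where
  run_nil: "run T p v [] p"
| run_cons: "\<lbrakk>(p, \<sigma>, g, r, p') \<in> T; guard_sat g (v + t);
              run T p' (if r then 0 else v + t) w p''\<rbrakk> \<Longrightarrow> run T p v ((\<sigma>, t) # w) p''"

definition reaches :: "'a ota \<Rightarrow> 'a tword \<Rightarrow> int \<Rightarrow> bool" where
  "reaches A w p \<longleftrightarrow> run (trans A) (init A) 0 w p"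

definition accepts :: "'a ota \<Rightarrow> 'a tword \<Rightarrow> bool" where
  "accepts A w \<longleftrightarrow> (\<exists>p \<in> accs A. reaches A w p)"

text \<open>Clock value after w, computed with the resets b of its prefixes (b [] is assumed True).\<close>
definition clock_after :: "('a tword \<Rightarrow> bool) \<Rightarrow> 'a tword \<Rightarrow> real" where
  "clock_after b w = nu_c w (GREATEST i. i \<le> length w \<and> b (take i w))"

definition aux_trans :: "'a tword set \<Rightarrow> ('a tword \<Rightarrow> bool) \<Rightarrow> ('a tword \<Rightarrow> int)
                         \<Rightarrow> (int \<times> 'a \<times> real \<times> bool \<times> int) set" where
  "aux_trans T b q = {(q w, \<sigma>, clock_after b w + t, b (w @ [(\<sigma>, t)]), q (w @ [(\<sigma>, t)])) | w \<sigma> t.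
                        w \<in> T \<and> w @ [(\<sigma>, t)] \<in> T}"

definition aux_vals :: "'a tword set \<Rightarrow> ('a tword \<Rightarrow> bool) \<Rightarrow> ('a tword \<Rightarrow> int) \<Rightarrow> int \<Rightarrow> 'a \<Rightarrow> real list" where
  "aux_vals T b q p \<sigma> = sorted_list_of_set {\<psi>. \<exists>r p'. (p, \<sigma>, \<psi>, r, p') \<in> aux_trans T b q}"

text \<open>Partition function: guard from mu_i to mu_{i+1} (None = \<infinity>, treated as an integer).\<close>
definition part_guard :: "real \<Rightarrow> real option \<Rightarrow> guard" where
  "part_guard lo hi =
     Guard (nat \<lfloor>lo\<rfloor>) (lo \<in> \<nat>)
           (case hi of None \<Rightarrow> None | Some h \<Rightarrow> Some (nat \<lfloor>h\<rfloor>))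
           (case hi of None \<Rightarrow> False | Some h \<Rightarrow> h \<notin> \<nat>)"

text \<open>Guard g_i for the sorted list mu_0 < ... < mu_n, where mu_0 is taken to be 0 and mu_{n+1} = \<infinity>.\<close>
definition guard_of :: "real list \<Rightarrow> nat \<Rightarrow> guard" where
  "guard_of mus i = part_guard (if i = 0 then 0 else mus ! i)
                               (if Suc i < length mus then Some (mus ! Suc i) else None)"

definition hyp :: "('a tword \<Rightarrow> bool) \<Rightarrow> 'a tword set \<Rightarrow> 'a tword set \<Rightarrow> 'a tword set
                   \<Rightarrow> ('a tword \<Rightarrow> bool) \<Rightarrow> ('a tword \<Rightarrow> int) \<Rightarrow> 'a ota" where
  "hyp MQ S Sp R b q =
     \<lparr> locs = q ` (S \<union> Sp),
       init = q [],
       accs = q ` {w \<in> S \<union> Sp. MQ w},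
       trans = {(p, \<sigma>, guard_of (aux_vals (S \<union> Sp \<union> R) b q p \<sigma>) i, r, p') | p \<sigma> \<psi> r p' i.
                 (p, \<sigma>, \<psi>, r, p') \<in> aux_trans (S \<union> Sp \<union> R) b q \<and>
                 i < length (aux_vals (S \<union> Sp \<union> R) b q p \<sigma>) \<and>
                 aux_vals (S \<union> Sp \<union> R) b q p \<sigma> ! i = \<psi>} \<rparr>"

end

theory Submission
  imports Defs
begin

text \<open>
  Applied to the empty test, C1 forces table words that share a location to agree on membership;
  applied to their last resets, it forces \<open>f\<close> to hold between them.  C2 then makes an auxiliary
  transition a function of its source, its action and the region of its clock value.  The
  partition guards of a location and an action are pairwise disjoint, and the guard covering an
  auxiliary value belongs to an auxiliary value in the same region, hence to a transition with
  the same reset and target.  So the hypothesis is deterministic, and along every table word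
  \<open>\<omega>\<close> its unique run ends in \<open>q\<^sub>\<omega>\<close> with the clock value prescribed by \<open>b\<close>; acceptance and
  separation are then read off C1 and C3.
\<close>

section \<open>Partition guards\<close>

lemma of_int_floor_Nats: "(x :: real) \<in> \<nat> \<Longrightarrow> of_int \<lfloor>x\<rfloor> = x"
  by (metis Nats_cases floor_of_nat of_int_of_nat_eq)

lemma Nats_iff_of_int_floor_eq:
  fixes x :: real
  assumes "0 \<le> x"
  shows "x \<in> \<nat> \<longleftrightarrow> of_int \<lfloor>x\<rfloor> = x"
proof
  assume "x \<in> \<nat>"
  then show "of_int \<lfloor>x\<rfloor> = x" by (rule of_int_floor_Nats)
next
  assume "of_int \<lfloor>x\<rfloor> = x"
  then have "x = of_nat (nat \<lfloor>x\<rfloor>)" using assms by (metis of_nat_nat zero_le_floor)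
  then show "x \<in> \<nat>" by (metis of_nat_in_Nats)
qed

definition lower_bound_sat :: "real \<Rightarrow> real \<Rightarrow> bool" where
  "lower_bound_sat lo v \<longleftrightarrow> (if lo \<in> \<nat> then lo \<le> v else of_int \<lfloor>lo\<rfloor> < v)"

definition upper_bound_sat :: "real \<Rightarrow> real \<Rightarrow> bool" where
  "upper_bound_sat hi v \<longleftrightarrow> (if hi \<in> \<nat> then v < hi else v \<le> of_int \<lfloor>hi\<rfloor>)"

lemma guard_sat_guard_of:
  assumes "\<forall>x \<in> set mus. 0 \<le> x" and "i < length mus"
  shows "guard_sat (guard_of mus i) v \<longleftrightarrow>
    lower_bound_sat (if i = 0 then 0 else mus ! i) v \<and>
    (Suc i < length mus \<longrightarrow> upper_bound_sat (mus ! Suc i) v)"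
proof -
  have nonneg: "0 \<le> mus ! j" if "j < length mus" for j
    using assms(1) that by simp
  show ?thesis
    using nonneg[OF assms(2)] nonneg[of "Suc i"]
    by (auto simp: guard_of_def part_guard_def lower_bound_sat_def upper_bound_sat_def of_int_floor_Nats)
qed

lemma upper_lower_bound_sat_disjoint:
  assumes upper: "upper_bound_sat hi v" and lower: "lower_bound_sat lo v"
    and "hi \<le> lo" and "0 \<le> hi"
  shows False
proof -
  have floors: "of_int \<lfloor>hi\<rfloor> \<le> (of_int \<lfloor>lo\<rfloor> :: real)"
    using floor_mono[OF \<open>hi \<le> lo\<close>] by simp
  show False
  proof (cases "hi \<in> \<nat>")
    case True
    then show False
      using upper lower floors \<open>hi \<le> lo\<close> of_int_floor_Nats[OF True]
      unfolding lower_bound_sat_def upper_bound_sat_def by (auto split: if_splits)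
  next
    case False
    then have "of_int \<lfloor>hi\<rfloor> < hi"
      using Nats_iff_of_int_floor_eq[OF \<open>0 \<le> hi\<close>] by (metis less_eq_real_def of_int_floor_le)
    then show False
      using upper lower floors \<open>hi \<le> lo\<close> False
      unfolding lower_bound_sat_def upper_bound_sat_def by (auto split: if_splits)
  qed
qed

lemma guard_of_disjoint:
  assumes "sorted_wrt (<) mus" and "\<forall>x \<in> set mus. 0 \<le> x"
    and "i < j" and "j < length mus"
  shows "\<not> (guard_sat (guard_of mus i) v \<and> guard_sat (guard_of mus j) v)"
proof
  assume "guard_sat (guard_of mus i) v \<and> guard_sat (guard_of mus j) v"
  then have "upper_bound_sat (mus ! Suc i) v" and "lower_bound_sat (mus ! j) v"
    using assms by (simp_all add: guard_sat_guard_of)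
  moreover have "mus ! Suc i \<le> mus ! j"
    using assms by (simp add: sorted_nth_mono strict_sorted_imp_sorted)
  moreover have "0 \<le> mus ! Suc i"
    using assms by simp
  ultimately show False
    by (rule upper_lower_bound_sat_disjoint)
qed

lemma region_eq_if_floor_eq:
  fixes v v' :: real
  assumes "v \<notin> \<nat>" and "v' \<notin> \<nat>" and "\<lfloor>v\<rfloor> = \<lfloor>v'\<rfloor>"
  shows "region \<kappa> v = region \<kappa> v'"
proof -
  have above_iff: "real \<kappa> < x \<longleftrightarrow> int \<kappa> \<le> \<lfloor>x\<rfloor>" if "x \<notin> \<nat>" for x :: real
  proof -
    have "x \<noteq> real \<kappa>" using that by (metis of_nat_in_Nats)
    then show ?thesis by (simp add: le_floor_iff less_le)
  qed
  show ?thesis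
    using assms above_iff[of v] above_iff[of v'] by (simp add: region_def)
qed

lemma guard_of_contains_Nats:
  assumes sorted: "sorted_wrt (<) mus" and nonneg: "\<forall>x \<in> set mus. 0 \<le> x"
    and k: "k < length mus" and "mus ! k \<in> \<nat>"
  shows "guard_sat (guard_of mus k) (mus ! k)"
proof -
  have "upper_bound_sat (mus ! Suc k) (mus ! k)" if "Suc k < length mus"
  proof -
    have less: "mus ! k < mus ! Suc k"
      using sorted that by (simp add: sorted_wrt_nth_less)
    then have "\<lfloor>mus ! k\<rfloor> \<le> \<lfloor>mus ! Suc k\<rfloor>" by (simp add: floor_mono)
    then show ?thesis
      using less of_int_floor_Nats[OF \<open>mus ! k \<in> \<nat>\<close>]
      unfolding upper_bound_sat_def by (metis of_int_le_iff)
  qed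
  moreover have "lower_bound_sat (if k = 0 then 0 else mus ! k) (mus ! k)"
    using nonneg k \<open>mus ! k \<in> \<nat>\<close> by (auto simp: lower_bound_sat_def)
  ultimately show ?thesis
    using nonneg k by (simp add: guard_sat_guard_of)
qed

text \<open>For non-integral \<open>mus ! k\<close>, the guard of the last \<open>mus ! i\<close> below \<open>\<lfloor>mus ! k\<rfloor> + 1\<close>
  contains \<open>mus ! k\<close>, and \<open>mus ! i\<close> lies in the same unit interval.\<close>
lemma guard_of_contains_non_Nats:
  assumes sorted: "sorted_wrt (<) mus" and nonneg: "\<forall>x \<in> set mus. 0 \<le> x"
    and k: "k < length mus" and "mus ! k \<notin> \<nat>"
  obtains i where "i < length mus" and "guard_sat (guard_of mus i) (mus ! k)"
    and "mus ! i \<notin> \<nat>" and "\<lfloor>mus ! i\<rfloor> = \<lfloor>mus ! k\<rfloor>"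
proof -
  define v where "v = mus ! k"
  define n where "n = \<lfloor>v\<rfloor>"
  have "of_int n \<noteq> v"
    using Nats_iff_of_int_floor_eq nonneg k \<open>mus ! k \<notin> \<nat>\<close> by (simp add: n_def v_def)
  then have v_bounds: "of_int n < v" "v < of_int n + 1"
    unfolding n_def by (simp add: less_le, linarith)
  define P where "P j \<longleftrightarrow> j < length mus \<and> mus ! j < of_int n + 1" for j
  define i where "i = (GREATEST j. P j)"
  have "P k" using k v_bounds by (simp add: P_def v_def)
  have bounded: "P j \<Longrightarrow> j \<le> length mus" for j by (simp add: P_def)
  have "P i" using GreatestI_nat[of P, OF \<open>P k\<close> bounded] by (simp add: i_def)
  then have i: "i < length mus" "mus ! i < of_int n + 1" by (simp_all add: P_def)
  have "k \<le> i" using Greatest_le_nat[of P, OF \<open>P k\<close> bounded] by (simp add: i_def)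
  then have "v \<le> mus ! i"
    using sorted i(1) by (simp add: v_def sorted_nth_mono strict_sorted_imp_sorted)
  then have floor_i: "\<lfloor>mus ! i\<rfloor> = n"
    using v_bounds i(2) by linarith
  have "mus ! i \<notin> \<nat>"
    using of_int_floor_Nats floor_i v_bounds \<open>v \<le> mus ! i\<close> by fastforce
  have "lower_bound_sat (if i = 0 then 0 else mus ! i) v"
    using v_bounds \<open>mus ! i \<notin> \<nat>\<close> floor_i nonneg k by (simp add: lower_bound_sat_def v_def)
  moreover have "upper_bound_sat (mus ! Suc i) v" if "Suc i < length mus"
  proof -
    have "\<not> P (Suc i)"
      using Greatest_le_nat[of P "Suc i", OF _ bounded] by (auto simp: i_def)
    then have "of_int n + 1 \<le> mus ! Suc i" using that by (simp add: P_def)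
    then have "n + 1 \<le> \<lfloor>mus ! Suc i\<rfloor>" by (simp add: le_floor_iff)
    then show ?thesis
      using v_bounds \<open>of_int n + 1 \<le> mus ! Suc i\<close> by (simp add: upper_bound_sat_def)
  qed
  ultimately have "guard_sat (guard_of mus i) v"
    using nonneg i(1) by (simp add: guard_sat_guard_of)
  then show ?thesis
    using that i(1) \<open>mus ! i \<notin> \<nat>\<close> floor_i by (simp add: v_def n_def)
qed

lemma guard_of_covers:
  assumes "sorted_wrt (<) mus" and "\<forall>x \<in> set mus. 0 \<le> x" and "k < length mus"
  obtains i where "i < length mus" and "guard_sat (guard_of mus i) (mus ! k)"
    and "region \<kappa> (mus ! i) = region \<kappa> (mus ! k)"
proof (cases "mus ! k \<in> \<nat>")
  case True
  then show ?thesis using that guard_of_contains_Nats[OF assms] assms(3) by blast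
next
  case False
  then show ?thesis
    using that guard_of_contains_non_Nats[OF assms False] region_eq_if_floor_eq by metis
qed

section \<open>Last resets\<close>

definition last_reset :: "('a tword \<Rightarrow> bool) \<Rightarrow> 'a tword \<Rightarrow> nat" where
  "last_reset b w = (GREATEST i. i \<le> length w \<and> b (take i w))"

lemma clock_after_eq_nu_c: "clock_after b w = nu_c w (last_reset b w)"
  by (simp add: clock_after_def last_reset_def)

lemma lr_last_reset:
  assumes "b []"
  shows "last_reset b w \<le> length w" and "lr b w (last_reset b w)"
proof -
  let ?P = "\<lambda>i. i \<le> length w \<and> b (take i w)"
  have "?P 0" using assms by simp
  then have "?P (last_reset b w)"
    unfolding last_reset_def by (rule GreatestI_nat[where b = "length w"]) simp
  moreover have "\<not> ?P j" if "last_reset b w < j" for j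
    using Greatest_le_nat[of ?P j "length w"] that unfolding last_reset_def by auto
  ultimately show "last_reset b w \<le> length w" and "lr b w (last_reset b w)"
    by (auto simp: lr_def)
qed

lemma lr_imp_last_reset:
  assumes "lr b w i" and "i \<le> length w"
  shows "last_reset b w = i"
  using assms unfolding last_reset_def lr_def
  by (intro Greatest_equality) (auto simp flip: not_less)

lemma nu_c_lr:
  assumes "lr b w i"
  shows "nu_c w i = clock_after b w"
proof (cases "i \<le> length w")
  case True
  then show ?thesis using assms by (simp add: clock_after_eq_nu_c lr_imp_last_reset)
next
  case False
  then have "lr b w (length w)" using assms by (simp add: lr_def)
  then have "last_reset b w = length w" by (simp add: lr_imp_last_reset)
  then show ?thesis using False by (simp add: clock_after_eq_nu_c nu_c_def)
qed

lemma clock_after_Nil: "clock_after b [] = 0"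
  by (simp add: clock_after_def nu_c_def)

lemma clock_after_snoc:
  assumes "b []"
  shows "clock_after b (w @ [(\<sigma>, t)]) = (if b (w @ [(\<sigma>, t)]) then 0 else clock_after b w + t)"
proof (cases "b (w @ [(\<sigma>, t)])")
  case True
  then have "lr b (w @ [(\<sigma>, t)]) (length (w @ [(\<sigma>, t)]))" by (auto simp: lr_def)
  then show ?thesis using True by (simp add: clock_after_eq_nu_c lr_imp_last_reset nu_c_def)
next
  case False
  have "lr b (w @ [(\<sigma>, t)]) (last_reset b w)"
    using lr_last_reset[of b, OF assms, of w] False
    by (auto simp: lr_def le_Suc_eq)
  then have "last_reset b (w @ [(\<sigma>, t)]) = last_reset b w"
    using lr_last_reset(1)[of b, OF assms, of w] by (simp add: lr_imp_last_reset)
  then show ?thesis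
    using False lr_last_reset(1)[of b, OF assms, of w] by (simp add: clock_after_eq_nu_c nu_c_def)
qed

lemma ftab_nu_c_cong:
  assumes "nu_c w1 i = nu_c w1 i'" and "nu_c w2 j = nu_c w2 j'"
  shows "ftab MQ E w1 w2 i j = ftab MQ E w1 w2 i' j'"
  using assms by (simp add: ftab_def test_def)

lemma take_eq_if_le_lcp_len: "k \<le> lcp_len xs ys \<Longrightarrow> take k xs = take k ys"
proof (induction xs ys arbitrary: k rule: lcp_len.induct)
  case (1 x xs y ys)
  then show ?case by (cases k) (auto split: if_splits)
qed auto

lemma lcp_len_le_length: "lcp_len xs ys \<le> length xs" "lcp_len xs ys \<le> length ys"
  by (induction xs ys rule: lcp_len.induct) auto

text \<open>A reset inside the common prefix is a reset of both words, so two last resets that both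
  lie there coincide.\<close>
lemma last_resets_in_valid_combs:
  assumes "b []"
  shows "(last_reset b w1, last_reset b w2) \<in> valid_combs w1 w2"
proof -
  let ?i = "last_reset b w1" and ?j = "last_reset b w2"
  have lr: "lr b w1 ?i" "lr b w2 ?j" and le: "?i \<le> length w1" "?j \<le> length w2"
    using lr_last_reset[of b, OF assms] by auto
  have "?i = ?j" if "?i \<le> lcp_len w1 w2" and "?j \<le> lcp_len w1 w2"
  proof (rule ccontr)
    assume "?i \<noteq> ?j"
    then consider "?i < ?j" | "?j < ?i" by linarith
    then show False
    proof cases
      case 1
      then show False
        using lr take_eq_if_le_lcp_len[OF that(2)] lcp_len_le_length(1)[of w1 w2] that(2)
        by (auto simp: lr_def)
    next
      case 2
      then show False
        using lr take_eq_if_le_lcp_len[OF that(1)] lcp_len_le_length(2)[of w1 w2] that(1)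
        by (auto simp: lr_def)
    qed
  qed
  then show ?thesis using le by (simp add: valid_combs_def)
qed

section \<open>The hypothesis automaton\<close>

lemma run_Nil_iff: "run T p v [] p' \<longleftrightarrow> p' = p"
  by (auto elim: run.cases intro: run.intros)

lemma run_Cons_iff:
  "run T p v ((\<sigma>, t) # w) p'' \<longleftrightarrow>
    (\<exists>g r p'. (p, \<sigma>, g, r, p') \<in> T \<and> guard_sat g (v + t) \<and> run T p' (if r then 0 else v + t) w p'')"
  (is "?run \<longleftrightarrow> ?step")
proof
  show "?run \<Longrightarrow> ?step" by (cases rule: run.cases) blast+
qed (auto intro: run.intros)

locale table_assignment =
  fixes Alph :: "'a set" and MQ :: "'a tword \<Rightarrow> bool" and S Sp R E :: "'a tword set"
    and N \<kappa> :: nat and b :: "'a tword \<Rightarrow> bool" and q :: "'a tword \<Rightarrow> int"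
  assumes obs_table: "obs_table Alph S Sp R E" and b_Nil: "b []"
    and C1: "C1 MQ S Sp R E b q" and C2: "C2 \<kappa> MQ S Sp R E b q" and C3: "C3 N S Sp R q"
begin

abbreviation "words \<equiv> S \<union> Sp \<union> R"
abbreviation "H \<equiv> hyp MQ S Sp R b q"
abbreviation "aux \<equiv> aux_trans words b q"
abbreviation "mus p \<sigma> \<equiv> aux_vals words b q p \<sigma>"

lemma finite_words: "finite words"
  using obs_table by (simp add: obs_table_def)

lemma take_in_words: "w \<in> words \<Longrightarrow> take i w \<in> words"
  using obs_table unfolding obs_table_def by (metis nat_le_linear take_all)

lemma snoc_in_words: "w @ [x] \<in> words \<Longrightarrow> w \<in> words"
  using take_in_words[of "w @ [x]" "length w"] by simp

lemma letter_in_words: "w \<in> words \<Longrightarrow> (\<sigma>, t) \<in> set w \<Longrightarrow> \<sigma> \<in> Alph \<and> 0 \<le> t"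
  using obs_table unfolding obs_table_def tword_over_def by blast

lemma clock_after_nonneg:
  assumes "w \<in> words"
  shows "0 \<le> clock_after b w"
proof -
  have "\<forall>t \<in> set (map snd (drop i w)). 0 \<le> t" for i
    using letter_in_words[OF assms] set_drop_subset[of i w] by fastforce
  then show ?thesis
    unfolding clock_after_eq_nu_c nu_c_def by (intro sum_list_nonneg) blast
qed

lemma q_in_locs: "w \<in> words \<Longrightarrow> q w \<in> q ` (S \<union> Sp)"
  using C3 unfolding C3_def by (metis image_eqI)

lemma ftab_last_resets_if_same_loc:
  assumes "w1 \<in> words" and "w2 \<in> words" and "q w1 = q w2"
  shows "ftab MQ E w1 w2 (last_reset b w1) (last_reset b w2)"
  using C1 assms last_resets_in_valid_combs[of b, OF b_Nil] lr_last_reset(2)[of b, OF b_Nil]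
  unfolding C1_def LR_def by fast

lemma MQ_eq_if_same_loc:
  assumes "w1 \<in> words" and "w2 \<in> words" and "q w1 = q w2"
  shows "MQ w1 = MQ w2"
proof -
  have "[] \<in> E" using obs_table by (simp add: obs_table_def)
  then show ?thesis
    using ftab_last_resets_if_same_loc[OF assms] by (simp add: ftab_def test_def)
qed

lemma successors_agree_if_same_loc:
  assumes "w1 @ [(\<sigma>, t1)] \<in> words" and "w2 @ [(\<sigma>, t2)] \<in> words" and "q w1 = q w2"
    and "region \<kappa> (clock_after b w1 + t1) = region \<kappa> (clock_after b w2 + t2)"
  shows "b (w1 @ [(\<sigma>, t1)]) = b (w2 @ [(\<sigma>, t2)]) \<and> q (w1 @ [(\<sigma>, t1)]) = q (w2 @ [(\<sigma>, t2)])"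
proof -
  have words: "w1 \<in> words" "w2 \<in> words"
    using assms(1,2) snoc_in_words by blast+
  show ?thesis
    using C2 assms words ftab_last_resets_if_same_loc[OF words assms(3)]
      last_resets_in_valid_combs[of b, OF b_Nil] lr_last_reset(2)[of b, OF b_Nil]
    unfolding C2_def LR_def clock_after_eq_nu_c by blast
qed

lemma aux_trans_iff:
  "(p, \<sigma>, \<psi>, r, p') \<in> aux \<longleftrightarrow>
    (\<exists>w t. w @ [(\<sigma>, t)] \<in> words \<and> p = q w \<and> \<psi> = clock_after b w + t \<and>
       r = b (w @ [(\<sigma>, t)]) \<and> p' = q (w @ [(\<sigma>, t)]))"
  unfolding aux_trans_def using snoc_in_words by blast

lemma aux_trans_functional:
  assumes "(p, \<sigma>, \<psi>, r, p') \<in> aux" and "(p, \<sigma>, \<psi>', r', p'') \<in> aux"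
    and "region \<kappa> \<psi> = region \<kappa> \<psi>'"
  shows "r = r' \<and> p' = p''"
proof -
  obtain w1 t1 where w1: "w1 @ [(\<sigma>, t1)] \<in> words" "p = q w1" "\<psi> = clock_after b w1 + t1"
    "r = b (w1 @ [(\<sigma>, t1)])" "p' = q (w1 @ [(\<sigma>, t1)])"
    using assms(1) unfolding aux_trans_iff by blast
  obtain w2 t2 where w2: "w2 @ [(\<sigma>, t2)] \<in> words" "p = q w2" "\<psi>' = clock_after b w2 + t2"
    "r' = b (w2 @ [(\<sigma>, t2)])" "p'' = q (w2 @ [(\<sigma>, t2)])"
    using assms(2) unfolding aux_trans_iff by blast
  have "q w1 = q w2" using w1(2) w2(2) by simp
  moreover have "region \<kappa> (clock_after b w1 + t1) = region \<kappa> (clock_after b w2 + t2)"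
    using assms(3) w1(3) w2(3) by simp
  ultimately show ?thesis
    using successors_agree_if_same_loc[OF w1(1) w2(1)] w1(4,5) w2(4,5) by simp
qed

lemma aux_trans_nonneg: "(p, \<sigma>, \<psi>, r, p') \<in> aux \<Longrightarrow> 0 \<le> \<psi>"
  unfolding aux_trans_iff
  by (metis add_nonneg_nonneg clock_after_nonneg in_set_conv_decomp letter_in_words snoc_in_words)

lemma finite_aux_trans: "finite aux"
proof (rule finite_surj[OF finite_words])
  let ?aux_of = "\<lambda>w. (q (butlast w), fst (last w), clock_after b (butlast w) + snd (last w), b w, q w)"
  show "aux \<subseteq> ?aux_of ` words"
  proof
    fix x
    assume "x \<in> aux"
    then obtain w \<sigma> t where x: "x = ?aux_of (w @ [(\<sigma>, t)])" and w: "w @ [(\<sigma>, t)] \<in> words"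
      unfolding aux_trans_def by auto
    show "x \<in> ?aux_of ` words" unfolding x using w by (rule imageI)
  qed
qed

lemma set_aux_vals: "set (mus p \<sigma>) = {\<psi>. \<exists>r p'. (p, \<sigma>, \<psi>, r, p') \<in> aux}"
  unfolding aux_vals_def
proof (rule set_sorted_list_of_set)
  have "{\<psi>. \<exists>r p'. (p, \<sigma>, \<psi>, r, p') \<in> aux} \<subseteq> (\<lambda>(_, _, \<psi>, _). \<psi>) ` aux"
  proof
    fix \<psi>
    assume "\<psi> \<in> {\<psi>. \<exists>r p'. (p, \<sigma>, \<psi>, r, p') \<in> aux}"
    then obtain r p' where "(p, \<sigma>, \<psi>, r, p') \<in> aux" by blast
    then show "\<psi> \<in> (\<lambda>(_, _, \<psi>, _). \<psi>) ` aux" by (rule rev_image_eqI) simp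
  qed
  then show "finite {\<psi>. \<exists>r p'. (p, \<sigma>, \<psi>, r, p') \<in> aux}"
    by (rule finite_surj[OF finite_aux_trans])
qed

lemma sorted_aux_vals: "sorted_wrt (<) (mus p \<sigma>)"
  unfolding aux_vals_def by (rule strict_sorted_list_of_set)

lemma aux_vals_nonneg: "\<forall>x \<in> set (mus p \<sigma>). 0 \<le> x"
  using aux_trans_nonneg by (auto simp: set_aux_vals)

lemma trans_hyp_iff:
  "tr \<in> trans H \<longleftrightarrow> (\<exists>p \<sigma> \<psi> r p' i. tr = (p, \<sigma>, guard_of (mus p \<sigma>) i, r, p') \<and>
     (p, \<sigma>, \<psi>, r, p') \<in> aux \<and> i < length (mus p \<sigma>) \<and> mus p \<sigma> ! i = \<psi>)"
  unfolding hyp_def by simp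

lemma deterministic_hyp: "deterministic H"
  unfolding deterministic_def
proof (intro ballI)
  fix tr1 tr2
  assume "tr1 \<in> trans H" and "tr2 \<in> trans H"
  obtain p1 \<sigma>1 \<psi>1 r1 p1' i1 where
    tr1: "tr1 = (p1, \<sigma>1, guard_of (mus p1 \<sigma>1) i1, r1, p1')" "(p1, \<sigma>1, \<psi>1, r1, p1') \<in> aux"
      "i1 < length (mus p1 \<sigma>1)" "mus p1 \<sigma>1 ! i1 = \<psi>1"
    using \<open>tr1 \<in> trans H\<close> unfolding trans_hyp_iff by blast
  obtain p2 \<sigma>2 \<psi>2 r2 p2' i2 where
    tr2: "tr2 = (p2, \<sigma>2, guard_of (mus p2 \<sigma>2) i2, r2, p2')" "(p2, \<sigma>2, \<psi>2, r2, p2') \<in> aux"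
      "i2 < length (mus p2 \<sigma>2)" "mus p2 \<sigma>2 ! i2 = \<psi>2"
    using \<open>tr2 \<in> trans H\<close> unfolding trans_hyp_iff by blast
  have "\<not> (guard_sat (guard_of (mus p1 \<sigma>1) i1) v \<and> guard_sat (guard_of (mus p1 \<sigma>1) i2) v)"
    if "tr1 \<noteq> tr2" and same: "p1 = p2" "\<sigma>1 = \<sigma>2" for v
  proof (cases "i1 = i2")
    case True
    then have "r1 = r2 \<and> p1' = p2'"
      using aux_trans_functional[OF tr1(2)] tr1(4) tr2(2,4) same by simp
    then show ?thesis
      using \<open>tr1 \<noteq> tr2\<close> tr1(1) tr2(1) same True by simp
  next
    case False
    then consider "i1 < i2" | "i2 < i1" by linarith
    then show ?thesis
    proof cases
      case 1
      then show ?thesis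
        using guard_of_disjoint[OF sorted_aux_vals aux_vals_nonneg 1] tr2(3) same by simp
    next
      case 2
      then show ?thesis
        using guard_of_disjoint[OF sorted_aux_vals aux_vals_nonneg 2] tr1(3) by blast
    qed
  qed
  then show "case (tr1, tr2) of ((p1, \<sigma>1, g1, r1, p1'), (p2, \<sigma>2, g2, r2, p2')) \<Rightarrow>
      tr1 \<noteq> tr2 \<and> p1 = p2 \<and> \<sigma>1 = \<sigma>2 \<longrightarrow> (\<forall>v. \<not> (guard_sat g1 v \<and> guard_sat g2 v))"
    using tr1(1) tr2(1) by auto
qed

lemma finite_trans_hyp: "finite (trans H)"
proof -
  let ?guards = "\<lambda>(p, \<sigma>, \<psi>, r, p'). (\<lambda>i. (p, \<sigma>, guard_of (mus p \<sigma>) i, r, p')) ` {..<length (mus p \<sigma>)}"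
  have "trans H \<subseteq> (\<Union>x \<in> aux. ?guards x)"
  proof
    fix tr
    assume "tr \<in> trans H"
    then obtain p \<sigma> \<psi> r p' i where "tr = (p, \<sigma>, guard_of (mus p \<sigma>) i, r, p')"
      and aux: "(p, \<sigma>, \<psi>, r, p') \<in> aux" and "i < length (mus p \<sigma>)"
      unfolding trans_hyp_iff by blast
    then have "tr \<in> ?guards (p, \<sigma>, \<psi>, r, p')" by simp
    then show "tr \<in> (\<Union>x \<in> aux. ?guards x)" using aux by blast
  qed
  moreover have "finite (?guards x)" for x
    by (simp split: prod.split)
  then have "finite (\<Union>x \<in> aux. ?guards x)"
    using finite_aux_trans by blast
  ultimately show ?thesis by (rule finite_subset)
qed

lemma is_OTA_hyp: "is_OTA Alph H"
proof -
  have locs: "locs H = q ` (S \<union> Sp)" and "init H = q []" and "accs H \<subseteq> locs H"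
    by (auto simp: hyp_def)
  have "q [] \<in> q ` (S \<union> Sp)" using obs_table by (simp add: obs_table_def)
  moreover have "p \<in> q ` (S \<union> Sp) \<and> \<sigma> \<in> Alph \<and> p' \<in> q ` (S \<union> Sp)"
    if tr: "(p, \<sigma>, g, r, p') \<in> trans H" for p \<sigma> g r p'
  proof -
    obtain \<psi> where "(p, \<sigma>, \<psi>, r, p') \<in> aux"
      using tr unfolding trans_hyp_iff by blast
    then obtain w t where "w @ [(\<sigma>, t)] \<in> words" "p = q w" "p' = q (w @ [(\<sigma>, t)])"
      unfolding aux_trans_iff by blast
    then show ?thesis
      using q_in_locs snoc_in_words letter_in_words[of "w @ [(\<sigma>, t)]" \<sigma> t] by simp
  qed
  ultimately show ?thesis
    unfolding is_OTA_def using locs \<open>init H = q []\<close> \<open>accs H \<subseteq> locs H\<close> finite_words finite_trans_hyp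
    by auto
qed

text \<open>The guard covering \<open>\<psi>\<close> belongs to an auxiliary transition whose value lies in the
  region of \<open>\<psi>\<close>; by C2 it has the same reset and target as the one of \<open>\<psi>\<close> itself.\<close>
lemma hyp_step_exists:
  assumes "u @ [(\<sigma>, t)] \<in> words"
  obtains g where "(q u, \<sigma>, g, b (u @ [(\<sigma>, t)]), q (u @ [(\<sigma>, t)])) \<in> trans H"
    and "guard_sat g (clock_after b u + t)"
proof -
  let ?\<psi> = "clock_after b u + t" and ?mus = "mus (q u) \<sigma>"
  have "u \<in> words" using assms by (rule snoc_in_words)
  then have aux: "(q u, \<sigma>, ?\<psi>, b (u @ [(\<sigma>, t)]), q (u @ [(\<sigma>, t)])) \<in> aux"
    unfolding aux_trans_def using assms by blast
  then have "?\<psi> \<in> set ?mus" by (auto simp: set_aux_vals)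
  then obtain k where k: "k < length ?mus" "?mus ! k = ?\<psi>"
    by (metis in_set_conv_nth)
  obtain i where i: "i < length ?mus" "guard_sat (guard_of ?mus i) (?mus ! k)"
    "region \<kappa> (?mus ! i) = region \<kappa> (?mus ! k)"
    using guard_of_covers[OF sorted_aux_vals aux_vals_nonneg k(1)] .
  obtain r p' where aux_i: "(q u, \<sigma>, ?mus ! i, r, p') \<in> aux"
    using nth_mem[OF i(1)] by (auto simp: set_aux_vals)
  then have "r = b (u @ [(\<sigma>, t)]) \<and> p' = q (u @ [(\<sigma>, t)])"
    using aux_trans_functional[OF _ aux] i(3) k(2) by simp
  then have "(q u, \<sigma>, guard_of ?mus i, b (u @ [(\<sigma>, t)]), q (u @ [(\<sigma>, t)])) \<in> trans H"
    using aux_i i(1) by (auto simp: trans_hyp_iff)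
  then show ?thesis using that i(2) k(2) by simp
qed

lemma hyp_step_unique:
  assumes "u @ [(\<sigma>, t)] \<in> words"
    and "(q u, \<sigma>, g, r, p') \<in> trans H" and "guard_sat g (clock_after b u + t)"
  shows "r = b (u @ [(\<sigma>, t)]) \<and> p' = q (u @ [(\<sigma>, t)])"
proof -
  obtain g' where "(q u, \<sigma>, g', b (u @ [(\<sigma>, t)]), q (u @ [(\<sigma>, t)])) \<in> trans H"
    and "guard_sat g' (clock_after b u + t)"
    using hyp_step_exists[OF assms(1)] .
  then show ?thesis
    using deterministic_hyp assms(2,3) unfolding deterministic_def by fastforce
qed

lemma run_hyp_iff:
  "u @ w \<in> words \<Longrightarrow> run (trans H) (q u) (clock_after b u) w p \<longleftrightarrow> p = q (u @ w)"
proof (induction w arbitrary: u)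
  case Nil
  then show ?case by (simp add: run_Nil_iff)
next
  case (Cons x w)
  obtain \<sigma> t where x: "x = (\<sigma>, t)" by (cases x)
  let ?u' = "u @ [(\<sigma>, t)]"
  have "?u' @ w \<in> words" using Cons.prems x by simp
  then have IH: "run (trans H) (q ?u') (clock_after b ?u') w p \<longleftrightarrow> p = q (u @ x # w)"
    using Cons.IH x by simp
  have u': "?u' \<in> words" using take_in_words[OF \<open>?u' @ w \<in> words\<close>, of "length ?u'"] by simp
  have clock: "clock_after b ?u' = (if b ?u' then 0 else clock_after b u + t)"
    using clock_after_snoc[of b, OF b_Nil] .
  show ?case
  proof
    assume "run (trans H) (q u) (clock_after b u) (x # w) p"
    then obtain g r p' where "(q u, \<sigma>, g, r, p') \<in> trans H" "guard_sat g (clock_after b u + t)"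
      and run: "run (trans H) p' (if r then 0 else clock_after b u + t) w p"
      unfolding x run_Cons_iff by blast
    then have "r = b ?u' \<and> p' = q ?u'" using hyp_step_unique[OF u'] by blast
    then show "p = q (u @ x # w)" using run IH clock by simp
  next
    assume "p = q (u @ x # w)"
    then have "run (trans H) (q ?u') (if b ?u' then 0 else clock_after b u + t) w p"
      using IH clock by simp
    moreover obtain g where "(q u, \<sigma>, g, b ?u', q ?u') \<in> trans H" "guard_sat g (clock_after b u + t)"
      using hyp_step_exists[OF u'] .
    ultimately show "run (trans H) (q u) (clock_after b u) (x # w) p"
      unfolding x run_Cons_iff by blast
  qed
qed

lemma reaches_hyp_iff: "w \<in> words \<Longrightarrow> reaches H w p \<longleftrightarrow> p = q w"
  using run_hyp_iff[of "[]" w p] unfolding reaches_def by (simp add: hyp_def clock_after_Nil)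

lemma accepts_hyp_iff:
  assumes "w \<in> words"
  shows "accepts H w \<longleftrightarrow> MQ w"
proof -
  have "accepts H w \<longleftrightarrow> q w \<in> accs H"
    unfolding accepts_def using reaches_hyp_iff[OF assms] by auto
  also have "accs H = q ` {w' \<in> S \<union> Sp. MQ w'}"
    by (simp add: hyp_def)
  also have "q w \<in> q ` {w' \<in> S \<union> Sp. MQ w'} \<longleftrightarrow> MQ w"
    using q_in_locs[OF assms] MQ_eq_if_same_loc[OF assms] by blast
  finally show ?thesis .
qed

lemma lr_not_ftab_imp_distinct_locs:
  assumes "w1 \<in> words" and "w2 \<in> words" and "lr b w1 i1" and "lr b w2 i2"
    and "\<not> ftab MQ E w1 w2 i1 i2"
  shows "q w1 \<noteq> q w2"
proof -
  have "ftab MQ E w1 w2 i1 i2 = ftab MQ E w1 w2 (last_reset b w1) (last_reset b w2)"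
    using assms(3,4) by (intro ftab_nu_c_cong) (simp_all add: nu_c_lr clock_after_eq_nu_c)
  then show ?thesis
    using assms ftab_last_resets_if_same_loc by blast
qed

end

theorem theorem1:
  fixes Alph :: "'a set" and MQ :: "'a tword \<Rightarrow> bool"
    and S Sp R E :: "'a tword set" and N \<kappa> :: nat
    and b :: "'a tword \<Rightarrow> bool" and q :: "'a tword \<Rightarrow> int"
    and enum :: "nat \<Rightarrow> 'a tword"
  assumes "finite Alph"
    and "obs_table Alph S Sp R E"
    and "bij_betw enum {1..card S} S"
    and "b [] = True"
    and "C1 MQ S Sp R E b q"
    and "C2 \<kappa> MQ S Sp R E b q"
    and "C3 N S Sp R q"
    and "C4 S enum q"
  shows "is_OTA Alph (hyp MQ S Sp R b q) \<and> deterministic (hyp MQ S Sp R b q)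
    \<and> (\<forall>w \<in> S \<union> Sp \<union> R. accepts (hyp MQ S Sp R b q) w \<longleftrightarrow> MQ w)
    \<and> (\<forall>w1 \<in> S \<union> Sp \<union> R. \<forall>w2 \<in> S \<union> Sp \<union> R. \<forall>i1 i2.
          lr b w1 i1 \<and> lr b w2 i2 \<and> \<not> ftab MQ E w1 w2 i1 i2 \<longrightarrow>
            q w1 \<noteq> q w2
            \<and> (\<exists>p1. reaches (hyp MQ S Sp R b q) w1 p1)
            \<and> (\<exists>p2. reaches (hyp MQ S Sp R b q) w2 p2)
            \<and> (\<forall>p1 p2. reaches (hyp MQ S Sp R b q) w1 p1 \<and> reaches (hyp MQ S Sp R b q) w2 p2
                 \<longrightarrow> p1 \<noteq> p2))"
proof -
  interpret table_assignment Alph MQ S Sp R E N \<kappa> b q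
    using assms by unfold_locales simp_all
  show ?thesis
    using is_OTA_hyp deterministic_hyp accepts_hyp_iff lr_not_ftab_imp_distinct_locs
    by (auto simp: reaches_hyp_iff)
qed

end
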